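(* For each $c\in[0,1]$, the following decision rule is a Bayes decision rule: \[ \delta^{**}_c(\mathbf{y},u)=\begin{cases}1 & \text{if } \sum_{i=1}^{n} w_i^{**} y_i > C^{**},\\ 0 & \text{if } \sum_{i=1}^{n} w_i^{**} y_i < C^{**},\\ u & \text{otherwise},\end{cases} \] where $w_i^{**}=2\log\!\left(\frac{\alpha_i}{\beta_i}\right)$ and $C^{**}=\log\!\left(\frac{1-c}{c}\right)+\sum_{i=1}^{n}\frac{w_i^{**}}{2}$.
   Context: The setting is a crowdsourcing problem with unknown expert accuracies. The unknown quantity is $\theta\in\{0,1\}$, and the observations are expert opinions $\mathbf{Y}=(Y_1,\ldots,Y_n)\in\{0,1\}^n$ together with a fair coin flip $U\sim\text{Bernoulli}(1/2)$ that is independent of $\mathbf{Y}$. The following assumptions hold: - $Y_1,\ldots,Y_n$ are independent conditionally on $(\theta,\gamma_1,\ldots,\gamma_n)$. - $P(Y_i=1\mid\theta=1,\gamma_i)=P(Y_i=0\mid\theta=0,\gamma_i)=\gamma_i$. - $n$ is odd. - The parameter space is $\{(\theta,\gamma_1,\ldots,\gamma_n):\theta\in\{0,1\},\ \gamma_i\in[0,1]\}$. The prior has the following form: - $\theta,\gamma_1,\ldots,\gamma_n$ are independent. - $P(\theta=1)=c$. - $\gamma_i\sim\text{Beta}(\alpha_i,\beta_i)$, with hyperparameters $\alpha_i,\beta_i$ fixed a priori. The loss is $L(\theta,a)=\mathbb{I}(\theta\neq a)$ for $a\in\{0,1\}$. A Bayes decision rule minimizes the expected risk under the prior. *)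

theory Defs
  imports "HOL-Probability.Probability"
begin

definition beta_density :: "real \<Rightarrow> real \<Rightarrow> real \<Rightarrow> real" where
  "beta_density a b x =
     (if 0 < x \<and> x < 1 then x powr (a - 1) * (1 - x) powr (b - 1) / Beta a b else 0)"

definition beta_measure :: "real \<Rightarrow> real \<Rightarrow> real measure" where
  "beta_measure a b = density lborel (\<lambda>x. ennreal (beta_density a b x))"

text \<open>Observation space: expert opinions y in {0,1}^n (True = 1), as extensional functions on {..<n}.\<close>
definition obs_space :: "nat \<Rightarrow> (nat \<Rightarrow> bool) set" where
  "obs_space n = PiE {..<n} (\<lambda>_. UNIV)"

definition lik :: "nat \<Rightarrow> bool \<Rightarrow> (nat \<Rightarrow> real) \<Rightarrow> (nat \<Rightarrow> bool) \<Rightarrow> real" where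
  "lik n \<theta> \<gamma> y = (\<Prod>i<n. if y i = \<theta> then \<gamma> i else 1 - \<gamma> i)"

text \<open>Frequentist risk of a decision rule delta(y,u) under 0-1 loss, with U ~ Bernoulli(1/2)
  independent of Y.\<close>
definition risk :: "nat \<Rightarrow> ((nat \<Rightarrow> bool) \<Rightarrow> bool \<Rightarrow> bool) \<Rightarrow> bool \<Rightarrow> (nat \<Rightarrow> real) \<Rightarrow> real" where
  "risk n \<delta> \<theta> \<gamma> =
     (\<Sum>y\<in>obs_space n. \<Sum>u\<in>(UNIV::bool set).
        (1/2) * lik n \<theta> \<gamma> y * (if \<theta> \<noteq> \<delta> y u then 1 else 0))"

definition gamma_prior :: "nat \<Rightarrow> (nat \<Rightarrow> real) \<Rightarrow> (nat \<Rightarrow> real) \<Rightarrow> (nat \<Rightarrow> real) measure" where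
  "gamma_prior n \<alpha> \<beta> = PiM {..<n} (\<lambda>i. beta_measure (\<alpha> i) (\<beta> i))"

definition bayes_risk ::
  "nat \<Rightarrow> (nat \<Rightarrow> real) \<Rightarrow> (nat \<Rightarrow> real) \<Rightarrow> real \<Rightarrow> ((nat \<Rightarrow> bool) \<Rightarrow> bool \<Rightarrow> bool) \<Rightarrow> real" where
  "bayes_risk n \<alpha> \<beta> c \<delta> =
     c * (\<integral>\<gamma>. risk n \<delta> True \<gamma> \<partial>gamma_prior n \<alpha> \<beta>)
     + (1 - c) * (\<integral>\<gamma>. risk n \<delta> False \<gamma> \<partial>gamma_prior n \<alpha> \<beta>)"

definition is_bayes_rule ::
  "nat \<Rightarrow> (nat \<Rightarrow> real) \<Rightarrow> (nat \<Rightarrow> real) \<Rightarrow> real \<Rightarrow> ((nat \<Rightarrow> bool) \<Rightarrow> bool \<Rightarrow> bool) \<Rightarrow> bool" where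
  "is_bayes_rule n \<alpha> \<beta> c \<delta> \<longleftrightarrow>
     (\<forall>\<delta>'. bayes_risk n \<alpha> \<beta> c \<delta> \<le> bayes_risk n \<alpha> \<beta> c \<delta>')"

definition w_ss :: "(nat \<Rightarrow> real) \<Rightarrow> (nat \<Rightarrow> real) \<Rightarrow> nat \<Rightarrow> real" where
  "w_ss \<alpha> \<beta> i = 2 * ln (\<alpha> i / \<beta> i)"

text \<open>Threshold C = log((1-c)/c) + sum_i w_i/2, as an extended real:
  log((1-0)/0) = +infinity and log(0/1) = -infinity at the endpoints c = 0, 1.\<close>
definition C_ss :: "nat \<Rightarrow> (nat \<Rightarrow> real) \<Rightarrow> (nat \<Rightarrow> real) \<Rightarrow> real \<Rightarrow> ereal" where
  "C_ss n \<alpha> \<beta> c =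
     (if c = 0 then \<infinity> else if c = 1 then -\<infinity>
      else ereal (ln ((1 - c) / c) + (\<Sum>i<n. w_ss \<alpha> \<beta> i / 2)))"

definition delta_ss ::
  "nat \<Rightarrow> (nat \<Rightarrow> real) \<Rightarrow> (nat \<Rightarrow> real) \<Rightarrow> real \<Rightarrow> (nat \<Rightarrow> bool) \<Rightarrow> bool \<Rightarrow> bool" where
  "delta_ss n \<alpha> \<beta> c y u =
     (let S = ereal (\<Sum>i<n. w_ss \<alpha> \<beta> i * (if y i then 1 else 0)) in
      if S > C_ss n \<alpha> \<beta> c then True
      else if S < C_ss n \<alpha> \<beta> c then False
      else u)"

end

theory Submission
  imports Defs
begin

text \<open>
  The likelihood of \<open>y\<close> is multilinear in the accuracies \<open>\<gamma>\<^sub>i\<close>, which are independent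
  under the prior, so integrating them out replaces each \<open>\<gamma>\<^sub>i\<close> by its prior mean
  \<open>p\<^sub>i = \<alpha>\<^sub>i / (\<alpha>\<^sub>i + \<beta>\<^sub>i)\<close>. The Bayes risk thereby becomes the 0-1 risk of a model
  with known accuracies \<open>p\<close>, and it is minimised pointwise in \<open>(y, u)\<close> by choosing a \<open>\<theta>\<close>
  of maximal joint probability \<open>P(\<theta>) P(y | \<theta>, p)\<close>. Since \<open>p\<^sub>i / (1 - p\<^sub>i) = \<alpha>\<^sub>i / \<beta>\<^sub>i\<close>,
  the log posterior odds of \<open>\<theta> = 1\<close> are exactly \<open>\<Sum>\<^sub>i w\<^sub>i y\<^sub>i - C\<close>, and the rule
  \<open>delta_ss\<close> picks the maximiser (either one on a tie).
\<close>

lemma Beta_pos_real: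
  fixes a b :: real
  assumes "0 < a" "0 < b"
  shows "0 < Beta a b"
  using assms by (simp add: Beta_def)

lemma beta_density_nonneg:
  assumes "0 < a" "0 < b"
  shows "0 \<le> beta_density a b x"
  using assms Beta_pos_real[OF assms] by (simp add: beta_density_def)

lemma borel_measurable_beta_density [measurable]: "beta_density a b \<in> borel_measurable borel"
  unfolding beta_density_def by measurable

lemma sets_beta_measure [simp, measurable_cong]: "sets (beta_measure a b) = sets borel"
  by (simp add: beta_measure_def)

lemma space_beta_measure [simp]: "space (beta_measure a b) = UNIV"
  by (simp add: beta_measure_def)

lemma nn_integral_beta_measure_monomial:
  fixes a b :: real and k l :: nat
  assumes a: "0 < a" and b: "0 < b"
  shows "(\<integral>\<^sup>+x. ennreal (x ^ k * (1 - x) ^ l) \<partial>beta_measure a b)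
           = ennreal (Beta (a + k) (b + l) / Beta a b)"
proof -
  define f where "f x = x powr (a + k - 1) * (1 - x) powr (b + l - 1) / Beta a b" for x
  have density: "beta_density a b x * (x ^ k * (1 - x) ^ l) = indicator {0..1} x * f x" for x
  proof (cases "0 < x \<and> x < 1")
    case True
    then show ?thesis
      by (simp add: beta_density_def f_def indicator_def powr_add powr_diff
          powr_realpow [symmetric] field_simps)
  qed (use a b in \<open>auto simp: beta_density_def f_def indicator_def\<close>)
  have f: "(f has_integral Beta (a + k) (b + l) / Beta a b) {0..1}"
    unfolding f_def using a b by (intro has_integral_divide has_integral_Beta_real) auto
  have "(\<integral>\<^sup>+x. ennreal (x ^ k * (1 - x) ^ l) \<partial>beta_measure a b)
      = (\<integral>\<^sup>+x. ennreal (beta_density a b x * (x ^ k * (1 - x) ^ l)) \<partial>lborel)"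
    unfolding beta_measure_def using beta_density_nonneg[OF a b]
    by (subst nn_integral_density) (auto simp: ennreal_mult')
  also have "\<dots> = (\<integral>\<^sup>+x. ennreal (indicator {0..1} x * f x) \<partial>lborel)"
    by (simp only: density)
  also have "\<dots> = ennreal (Beta (a + k) (b + l) / Beta a b)"
    using Beta_pos_real[OF a b] by (intro nn_integral_has_integral_lebesgue f) (simp add: f_def)
  finally show ?thesis .
qed

lemma beta_measure_AE_unit_interval: "AE x in beta_measure a b. 0 < x \<and> x < 1"
  unfolding beta_measure_def by (subst AE_density) (auto simp: beta_density_def)

lemma
  fixes a b :: real and k l :: nat
  assumes a: "0 < a" and b: "0 < b"
  shows integrable_beta_measure_monomial: "integrable (beta_measure a b) (\<lambda>x. x ^ k * (1 - x) ^ l)"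
    and integral_beta_measure_monomial:
      "(\<integral>x. x ^ k * (1 - x) ^ l \<partial>beta_measure a b) = Beta (a + k) (b + l) / Beta a b"
proof -
  have nonneg: "AE x in beta_measure a b. 0 \<le> x ^ k * (1 - x) ^ l"
    using beta_measure_AE_unit_interval by eventually_elim auto
  have "0 \<le> Beta (a + k) (b + l) / Beta a b"
    using a b Beta_pos_real[of a b] Beta_pos_real[of "a + k" "b + l"] by simp
  with nonneg show "integrable (beta_measure a b) (\<lambda>x. x ^ k * (1 - x) ^ l)"
    by (intro integrableI_nonneg) (auto simp: nn_integral_beta_measure_monomial[OF a b])
  show "(\<integral>x. x ^ k * (1 - x) ^ l \<partial>beta_measure a b) = Beta (a + k) (b + l) / Beta a b"
    using nonneg \<open>0 \<le> Beta (a + k) (b + l) / Beta a b\<close>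
    by (simp add: integral_eq_nn_integral nn_integral_beta_measure_monomial[OF a b])
qed

lemma prob_space_beta_measure:
  assumes "0 < a" "0 < b"
  shows "prob_space (beta_measure a b)"
  using nn_integral_beta_measure_monomial[OF assms, of 0 0] Beta_pos_real[OF assms]
  by (intro prob_spaceI) simp

lemma
  assumes a: "0 < a" and b: "0 < b"
  shows integrable_beta_measure_id: "integrable (beta_measure a b) (\<lambda>x. x)"
    and integral_beta_measure_id: "(\<integral>x. x \<partial>beta_measure a b) = a / (a + b)"
proof -
  show "integrable (beta_measure a b) (\<lambda>x. x)"
    using integrable_beta_measure_monomial[OF a b, of 1 0] by simp
  have "a \<notin> \<int>\<^sub>\<le>\<^sub>0"
    using a by (auto elim!: nonpos_Ints_cases)
  then have "Beta (a + 1) b = Beta a b * (a / (a + b))"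
    using Beta_plus1_left[of a b] a b by (simp add: field_simps)
  then show "(\<integral>x. x \<partial>beta_measure a b) = a / (a + b)"
    using integral_beta_measure_monomial[OF a b, of 1 0] Beta_pos_real[OF a b] by simp
qed

lemma
  fixes M :: "nat \<Rightarrow> real measure"
  assumes prob: "\<And>i. prob_space (M i)" and mean: "\<And>i. i < n \<Longrightarrow> integrable (M i) (\<lambda>x. x)"
  shows integrable_lik_PiM: "integrable (Pi\<^sub>M {..<n} M) (\<lambda>\<gamma>. lik n \<theta> \<gamma> y)"
    and integral_lik_PiM: "(\<integral>\<gamma>. lik n \<theta> \<gamma> y \<partial>Pi\<^sub>M {..<n} M) = lik n \<theta> (\<lambda>i. \<integral>x. x \<partial>M i) y"
proof -
  interpret product_sigma_finite M
    using prob by (simp add: product_sigma_finite_def prob_space_imp_sigma_finite)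
  define f where "f i x = (if y i = \<theta> then x else 1 - x)" for i and x :: real
  have lik: "lik n \<theta> \<gamma> y = (\<Prod>i<n. f i (\<gamma> i))" for \<gamma>
    by (simp add: lik_def f_def)
  have f: "integrable (M i) (f i)" "integral\<^sup>L (M i) (f i) = f i (\<integral>x. x \<partial>M i)"
    if "i < n" for i
  proof -
    interpret prob_space "M i"
      by (rule prob)
    show "integrable (M i) (f i)" "integral\<^sup>L (M i) (f i) = f i (\<integral>x. x \<partial>M i)"
      using mean[OF that] by (cases "y i = \<theta>"; simp add: f_def[abs_def] prob_space)+
  qed
  show "integrable (Pi\<^sub>M {..<n} M) (\<lambda>\<gamma>. lik n \<theta> \<gamma> y)"
    unfolding lik by (intro product_integrable_prod) (simp_all add: f)
  show "(\<integral>\<gamma>. lik n \<theta> \<gamma> y \<partial>Pi\<^sub>M {..<n} M) = lik n \<theta> (\<lambda>i. \<integral>x. x \<partial>M i) y"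
    unfolding lik by (subst product_integral_prod) (simp_all add: f)
qed

definition prior_mean :: "(nat \<Rightarrow> real) \<Rightarrow> (nat \<Rightarrow> real) \<Rightarrow> nat \<Rightarrow> real" where
  "prior_mean \<alpha> \<beta> i = \<alpha> i / (\<alpha> i + \<beta> i)"

lemma prior_mean_bounds:
  assumes "0 < \<alpha> i" "0 < \<beta> i"
  shows "0 < prior_mean \<alpha> \<beta> i \<and> prior_mean \<alpha> \<beta> i < 1"
  using assms by (simp add: prior_mean_def)

lemma
  assumes \<alpha>: "\<And>i. i < n \<Longrightarrow> 0 < \<alpha> i" and \<beta>: "\<And>i. i < n \<Longrightarrow> 0 < \<beta> i"
  shows integrable_lik_gamma_prior: "integrable (gamma_prior n \<alpha> \<beta>) (\<lambda>\<gamma>. lik n \<theta> \<gamma> y)"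
    and integral_lik_gamma_prior:
      "(\<integral>\<gamma>. lik n \<theta> \<gamma> y \<partial>gamma_prior n \<alpha> \<beta>) = lik n \<theta> (prior_mean \<alpha> \<beta>) y"
proof -
  \<comment> \<open>The factors with index \<open>i \<ge> n\<close> are irrelevant but must be probability spaces.\<close>
  define M where "M i = (if i < n then beta_measure (\<alpha> i) (\<beta> i) else beta_measure 1 1)" for i
  have prior: "gamma_prior n \<alpha> \<beta> = Pi\<^sub>M {..<n} M"
    unfolding gamma_prior_def by (intro PiM_cong) (simp_all add: M_def)
  have prob: "prob_space (M i)" for i
    using \<alpha> \<beta> by (simp add: M_def prob_space_beta_measure)
  have mean: "integrable (M i) (\<lambda>x. x)" "(\<integral>x. x \<partial>M i) = prior_mean \<alpha> \<beta> i" if "i < n" for i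
    using that \<alpha>[OF that] \<beta>[OF that]
    by (simp_all add: M_def prior_mean_def integrable_beta_measure_id integral_beta_measure_id)
  show "integrable (gamma_prior n \<alpha> \<beta>) (\<lambda>\<gamma>. lik n \<theta> \<gamma> y)"
    unfolding prior using prob mean(1) by (rule integrable_lik_PiM)
  have "lik n \<theta> (\<lambda>i. \<integral>x. x \<partial>M i) y = lik n \<theta> (prior_mean \<alpha> \<beta>) y"
    unfolding lik_def by (intro prod.cong) (simp_all add: mean(2))
  then show "(\<integral>\<gamma>. lik n \<theta> \<gamma> y \<partial>gamma_prior n \<alpha> \<beta>) = lik n \<theta> (prior_mean \<alpha> \<beta>) y"
    unfolding prior using prob mean(1) by (simp add: integral_lik_PiM)
qed

lemma integral_risk_gamma_prior:
  assumes "\<And>i. i < n \<Longrightarrow> 0 < \<alpha> i" and "\<And>i. i < n \<Longrightarrow> 0 < \<beta> i"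
  shows "(\<integral>\<gamma>. risk n \<delta> \<theta> \<gamma> \<partial>gamma_prior n \<alpha> \<beta>) = risk n \<delta> \<theta> (prior_mean \<alpha> \<beta>)"
proof -
  have "has_bochner_integral (gamma_prior n \<alpha> \<beta>) (\<lambda>\<gamma>. risk n \<delta> \<theta> \<gamma>) (risk n \<delta> \<theta> (prior_mean \<alpha> \<beta>))"
    unfolding risk_def
    by (intro has_bochner_integral_sum has_bochner_integral_mult_left has_bochner_integral_mult_right)
      (simp add: has_bochner_integral_iff integrable_lik_gamma_prior integral_lik_gamma_prior assms)
  then show ?thesis
    by (rule has_bochner_integral_integral_eq)
qed

definition joint_prob :: "nat \<Rightarrow> real \<Rightarrow> (nat \<Rightarrow> real) \<Rightarrow> bool \<Rightarrow> (nat \<Rightarrow> bool) \<Rightarrow> real" where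
  "joint_prob n c p \<theta> y = (if \<theta> then c else 1 - c) * lik n \<theta> p y"

lemma bayes_risk_eq_sum_joint_prob:
  assumes "\<And>i. i < n \<Longrightarrow> 0 < \<alpha> i" and "\<And>i. i < n \<Longrightarrow> 0 < \<beta> i"
  shows "bayes_risk n \<alpha> \<beta> c \<delta>
           = (\<Sum>y\<in>obs_space n. \<Sum>u\<in>UNIV. joint_prob n c (prior_mean \<alpha> \<beta>) (\<not> \<delta> y u) y / 2)"
proof -
  have pointwise: "c * ((1/2) * lik n True p y * (if True \<noteq> d then 1 else 0))
      + (1 - c) * ((1/2) * lik n False p y * (if False \<noteq> d then 1 else 0))
      = joint_prob n c p (\<not> d) y / 2" for p y d
    by (cases d) (simp_all add: joint_prob_def)
  have "bayes_risk n \<alpha> \<beta> c \<delta>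
      = c * risk n \<delta> True (prior_mean \<alpha> \<beta>) + (1 - c) * risk n \<delta> False (prior_mean \<alpha> \<beta>)"
    using integral_risk_gamma_prior[OF assms] by (simp add: bayes_risk_def)
  then show ?thesis
    by (simp only: risk_def sum_distrib_left sum.distrib[symmetric] pointwise)
qed

lemma is_bayes_rule_if_maximizes_joint_prob:
  assumes \<alpha>: "\<And>i. i < n \<Longrightarrow> 0 < \<alpha> i" and \<beta>: "\<And>i. i < n \<Longrightarrow> 0 < \<beta> i"
    and max: "\<And>y u. joint_prob n c (prior_mean \<alpha> \<beta>) (\<not> \<delta> y u) y
                      \<le> joint_prob n c (prior_mean \<alpha> \<beta>) (\<delta> y u) y"
  shows "is_bayes_rule n \<alpha> \<beta> c \<delta>"
  unfolding is_bayes_rule_def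
proof
  fix \<delta>'
  have le: "joint_prob n c (prior_mean \<alpha> \<beta>) (\<not> \<delta> y u) y
      \<le> joint_prob n c (prior_mean \<alpha> \<beta>) (\<not> \<delta>' y u) y" for y u
    using max[of y u] by (cases "\<delta>' y u = \<delta> y u") auto
  have "bayes_risk n \<alpha> \<beta> c \<delta>
      = (\<Sum>y\<in>obs_space n. \<Sum>u\<in>UNIV. joint_prob n c (prior_mean \<alpha> \<beta>) (\<not> \<delta> y u) y / 2)"
    using \<alpha> \<beta> by (rule bayes_risk_eq_sum_joint_prob)
  also have "\<dots> \<le> (\<Sum>y\<in>obs_space n. \<Sum>u\<in>UNIV. joint_prob n c (prior_mean \<alpha> \<beta>) (\<not> \<delta>' y u) y / 2)"
    using le by (intro sum_mono divide_right_mono) auto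
  also have "\<dots> = bayes_risk n \<alpha> \<beta> c \<delta>'"
    using \<alpha> \<beta> by (rule bayes_risk_eq_sum_joint_prob[symmetric])
  finally show "bayes_risk n \<alpha> \<beta> c \<delta> \<le> bayes_risk n \<alpha> \<beta> c \<delta>'" .
qed

lemma lik_pos:
  assumes "\<And>i. i < n \<Longrightarrow> 0 < p i \<and> p i < 1"
  shows "0 < lik n \<theta> p y"
  unfolding lik_def
proof (intro prod_pos)
  fix i assume "i \<in> {..<n}"
  then show "0 < (if y i = \<theta> then p i else 1 - p i)"
    using assms[of i] by auto
qed

lemma ln_lik_odds:
  assumes p: "\<And>i. i < n \<Longrightarrow> 0 < p i \<and> p i < 1"
  shows "ln (lik n True p y) - ln (lik n False p y)
           = (\<Sum>i<n. (if y i then 1 else -1) * ln (p i / (1 - p i)))"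
proof -
  have nonzero: "(if y i = \<theta> then p i else 1 - p i) \<noteq> 0" if "i < n" for i \<theta>
    using p[OF that] by auto
  have ln_lik: "ln (lik n \<theta> p y) = (\<Sum>i<n. ln (if y i = \<theta> then p i else 1 - p i))" for \<theta>
    unfolding lik_def by (intro ln_prod) (auto simp: nonzero)
  have "ln (lik n True p y) - ln (lik n False p y)
      = (\<Sum>i<n. ln (if y i then p i else 1 - p i) - ln (if \<not> y i then p i else 1 - p i))"
    by (simp add: ln_lik sum_subtractf)
  also have "\<dots> = (\<Sum>i<n. (if y i then 1 else -1) * ln (p i / (1 - p i)))"
  proof (intro sum.cong refl)
    fix i assume "i \<in> {..<n}"
    then have "0 < p i" "p i < 1"
      using p by auto
    then show "ln (if y i then p i else 1 - p i) - ln (if \<not> y i then p i else 1 - p i)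
        = (if y i then 1 else -1) * ln (p i / (1 - p i))"
      by (simp add: ln_div)
  qed
  finally show ?thesis .
qed

lemma ln_joint_prob_odds:
  assumes c: "0 < c" "c < 1" and p: "\<And>i. i < n \<Longrightarrow> 0 < p i \<and> p i < 1"
  shows "ln (joint_prob n c p True y) - ln (joint_prob n c p False y)
           = ln (c / (1 - c)) + (\<Sum>i<n. (if y i then 1 else -1) * ln (p i / (1 - p i)))"
proof -
  have "ln (joint_prob n c p \<theta> y) = ln (if \<theta> then c else 1 - c) + ln (lik n \<theta> p y)" for \<theta>
    using c lik_pos[of n p \<theta> y, OF p] by (simp add: joint_prob_def ln_mult)
  then show ?thesis
    using c ln_lik_odds[of n p, OF p] by (simp add: ln_div)
qed

lemma ln_prior_mean_odds:
  assumes "0 < \<alpha> i" "0 < \<beta> i"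
  shows "ln (prior_mean \<alpha> \<beta> i / (1 - prior_mean \<alpha> \<beta> i)) = w_ss \<alpha> \<beta> i / 2"
proof -
  have "1 - prior_mean \<alpha> \<beta> i = \<beta> i / (\<alpha> i + \<beta> i)"
    using assms by (simp add: prior_mean_def field_simps)
  then have "prior_mean \<alpha> \<beta> i / (1 - prior_mean \<alpha> \<beta> i) = \<alpha> i / \<beta> i"
    using assms by (simp add: prior_mean_def)
  then show ?thesis
    by (simp add: w_ss_def)
qed

lemma ln_joint_prob_odds_prior_mean:
  assumes \<alpha>: "\<And>i. i < n \<Longrightarrow> 0 < \<alpha> i" and \<beta>: "\<And>i. i < n \<Longrightarrow> 0 < \<beta> i"
    and c: "0 < c" "c < 1"
  shows "ln (joint_prob n c (prior_mean \<alpha> \<beta>) True y) - ln (joint_prob n c (prior_mean \<alpha> \<beta>) False y)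
           = (\<Sum>i<n. w_ss \<alpha> \<beta> i * (if y i then 1 else 0))
             - (ln ((1 - c) / c) + (\<Sum>i<n. w_ss \<alpha> \<beta> i / 2))"
proof -
  have p: "0 < prior_mean \<alpha> \<beta> i \<and> prior_mean \<alpha> \<beta> i < 1" if "i < n" for i
    using \<alpha>[OF that] \<beta>[OF that] by (rule prior_mean_bounds)
  have "(\<Sum>i<n. (if y i then 1 else -1) * ln (prior_mean \<alpha> \<beta> i / (1 - prior_mean \<alpha> \<beta> i)))
      = (\<Sum>i<n. w_ss \<alpha> \<beta> i * (if y i then 1 else 0) - w_ss \<alpha> \<beta> i / 2)"
    using \<alpha> \<beta> by (intro sum.cong) (auto simp: ln_prior_mean_odds)
  moreover have "ln (c / (1 - c)) = - ln ((1 - c) / c)"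
    using c by (simp add: ln_div)
  ultimately show ?thesis
    using ln_joint_prob_odds[of c n "prior_mean \<alpha> \<beta>" y, OF c p] by (simp add: sum_subtractf)
qed

lemma delta_ss_maximizes_joint_prob:
  assumes \<alpha>: "\<And>i. i < n \<Longrightarrow> 0 < \<alpha> i" and \<beta>: "\<And>i. i < n \<Longrightarrow> 0 < \<beta> i"
    and c: "0 \<le> c" "c \<le> 1"
  shows "joint_prob n c (prior_mean \<alpha> \<beta>) (\<not> delta_ss n \<alpha> \<beta> c y u) y
           \<le> joint_prob n c (prior_mean \<alpha> \<beta>) (delta_ss n \<alpha> \<beta> c y u) y"
proof -
  let ?J = "\<lambda>\<theta>. joint_prob n c (prior_mean \<alpha> \<beta>) \<theta> y"
  define S where "S = (\<Sum>i<n. w_ss \<alpha> \<beta> i * (if y i then 1 else 0))"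
  have lik: "0 < lik n \<theta> (prior_mean \<alpha> \<beta>) y" for \<theta>
    using \<alpha> \<beta> by (auto intro!: lik_pos prior_mean_bounds)
  have delta: "delta_ss n \<alpha> \<beta> c y u
      = (if ereal S > C_ss n \<alpha> \<beta> c then True else if ereal S < C_ss n \<alpha> \<beta> c then False else u)"
    by (simp add: delta_ss_def S_def)
  consider "c = 0" | "c = 1" | "0 < c \<and> c < 1"
    using c by linarith
  then show ?thesis
  proof cases
    case 1
    show ?thesis
      unfolding delta using 1 less_imp_le[OF lik] by (simp add: C_ss_def joint_prob_def)
  next
    case 2
    show ?thesis
      unfolding delta using 2 less_imp_le[OF lik] by (simp add: C_ss_def joint_prob_def)
  next
    case 3
    define K where "K = ln ((1 - c) / c) + (\<Sum>i<n. w_ss \<alpha> \<beta> i / 2)"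
    have C: "C_ss n \<alpha> \<beta> c = ereal K"
      using 3 by (simp add: C_ss_def K_def)
    have odds: "ln (?J True) - ln (?J False) = S - K"
      unfolding S_def K_def using 3 by (intro ln_joint_prob_odds_prior_mean \<alpha> \<beta>) auto
    have pos: "0 < ?J \<theta>" for \<theta>
      using 3 lik by (simp add: joint_prob_def)
    have "?J False \<le> ?J True \<longleftrightarrow> K \<le> S" "?J True \<le> ?J False \<longleftrightarrow> S \<le> K"
      using odds ln_le_cancel_iff[OF pos[of False] pos[of True]]
        ln_le_cancel_iff[OF pos[of True] pos[of False]]
      by linarith+
    then show ?thesis
      unfolding delta C by (cases u) auto
  qed
qed

theorem theorem6:
  fixes n :: nat and \<alpha> \<beta> :: "nat \<Rightarrow> real" and c :: real
  assumes "odd n"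
    and "\<And>i. i < n \<Longrightarrow> \<alpha> i > 0"
    and "\<And>i. i < n \<Longrightarrow> \<beta> i > 0"
    and "0 \<le> c" and "c \<le> 1"
  shows "is_bayes_rule n \<alpha> \<beta> c (delta_ss n \<alpha> \<beta> c)"
proof (rule is_bayes_rule_if_maximizes_joint_prob)
  fix y u
  show "joint_prob n c (prior_mean \<alpha> \<beta>) (\<not> delta_ss n \<alpha> \<beta> c y u) y
      \<le> joint_prob n c (prior_mean \<alpha> \<beta>) (delta_ss n \<alpha> \<beta> c y u) y"
    using assms(2-5) by (rule delta_ss_maximizes_joint_prob)
qed (use assms in auto)

end
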